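(* For all $\ell,n\in\{1,\dots,L+1\}$, $\delta\in\{1,2,3,4\}$, $w\in\mathcal W^{(\ell)}$, $q\in\mathcal W^{(n)}$, \[\big|(\mathcal E^{(\ell,\widehat{\mathbf x}^{(\delta)})}w,\mathcal E^{(n,\widehat{\mathbf x}^{(\delta)})}q)_{H^1(\widehat\Omega)}\big|\lesssim\frac{\min\{\widehat h_\ell,\widehat h_n\}}{\max\{\widehat h_\ell,\widehat h_n\}}\Big(p^{-1}\widehat h_\ell|w|^2_{H^1(\widehat\Gamma^{(\delta)})}+p^{-1}\widehat h_n|q|^2_{H^1(\widehat\Gamma^{(\delta)})}+p\,\widehat h_\ell^{-1}\|w\|^2_{L_2(\widehat\Gamma^{(\delta)})}+p\,\widehat h_n^{-1}\|q\|^2_{L_2(\widehat\Gamma^{(\delta)})}\Big).\]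
   Context: Single-patch parametric setting. $\widehat\Omega=(0,1)^2$, $p\ge1$. For $\delta=1,2$, $\Xi^{(\delta)}$ is a $p$-open knot vector on $[0,1]$ (end knots of multiplicity $p+1$, interior multiplicities in $\{1,\dots,p\}$) with distinct breakpoints satisfying $C_3\widehat h\le\zeta^{(\delta)}_{i+1}-\zeta^{(\delta)}_i\le\widehat h$. $\mathcal V=S[p,\Xi^{(1)}]\otimes S[p,\Xi^{(2)}]$, $\mathcal W=\{v|_{\partial\widehat\Omega}:v\in\mathcal V\}$. $(u,v)_{H^1(\widehat\Omega)}:=\int_{\widehat\Omega}\nabla u\cdot\nabla v$; on a side, $|w|_{H^1}$ is the $L_2$ norm of the tangential derivative. Grid hierarchy: $L\ge1$, $\widehat h_\ell:=4^{L-\ell}\widehat h$; for $\delta=1,2$, $\ell=1,\dots,L$ nested breakpoint vectors $Z^{(\delta,\ell)}$ (containing $0,1$, $Z^{(\delta,L)}$ = breakpoints of $\Xi^{(\delta)}$) with $c_0\widehat h_\ell\le$ consecutive differences $\le\widehat h_\ell$; $\Xi^{(\delta,\ell)}$ the $p$-open knot vector with breakpoints $Z^{(\delta,\ell)}$ and simple interior knots. $\gamma:\mathbb R\to\partial\widehat\Omega$ is the 4-periodic map $\gamma(t)=(0,t)$ on $[0,1)$, $(t-1,1)$ on $[1,2)$, $(1,3-t)$ on $[2,3)$, $(4-t,0)$ on $[3,4)$. For $\ell=1,\dots,L$, $\mathcal W^{(\ell)}=\{w\in(S[p,\Xi^{(1,\ell)}]\otimes S[p,\Xi^{(2,\ell)}])|_{\partial\widehat\Omega}: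 w\circ\gamma\in C^{p-1}(\mathbb R)\}$, $\mathcal W^{(L+1)}=\mathcal W$. Sides $\widehat\Gamma^{(\delta)}=\gamma((\delta-1,\delta))$ and vertices $\widehat{\mathbf x}^{(\delta)}=\gamma(\delta-1)$, $\delta=1,\dots,4$; the sides adjacent to $\widehat{\mathbf x}^{(\delta)}$ are $\widehat\Gamma^{(\delta-1)}$ and $\widehat\Gamma^{(\delta)}$ (with $\widehat\Gamma^{(0)}:=\widehat\Gamma^{(4)}$). For each side $\widehat\Gamma^{(\delta)}$ and level $\ell$, $\eta$ is the largest breakpoint (in the direction transversal to the side, of the fine knot vector) not exceeding $\max\{\widehat h_\ell,\text{smallest positive breakpoint}\}$, and $\theta^{(\ell,\widehat\Gamma^{(\delta)})}=\max\{0,1-d/\eta\}^p$ with $d$ the distance to the side. The vertex extension is $\mathcal E^{(\ell,\widehat{\mathbf x}^{(\delta)})}w=w(\widehat{\mathbf x}^{(\delta)})\,\theta^{(\ell,\widehat\Gamma^{(\delta-1)})}\,\theta^{(\ell,\widehat\Gamma^{(\delta)})}$; e.g. for $\widehat{\mathbf x}^{(1)}=(0,0)$: $w(0,0)\max\{0,1-x/\eta_1\}^p\max\{0,1-y/\eta_2\}^p$. $a\lesssim b$ means $a\le cb$ with $c$ depending only on $C_3,c_0$. *)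

theory Defs
  imports "HOL-Analysis.Analysis" "HOL-Computational_Algebra.Polynomial"
begin

definition consec :: "real set \<Rightarrow> real \<Rightarrow> real \<Rightarrow> bool" where
  "consec Z a b \<longleftrightarrow> a \<in> Z \<and> b \<in> Z \<and> a < b \<and> (\<forall>z\<in>Z. \<not> (a < z \<and> z < b))"

definition breakpoints_ok :: "real set \<Rightarrow> real \<Rightarrow> real \<Rightarrow> bool" where
  "breakpoints_ok Z lo hi \<longleftrightarrow> finite Z \<and> 0 \<in> Z \<and> 1 \<in> Z \<and> Z \<subseteq> {0..1} \<and>
     (\<forall>a b. consec Z a b \<longrightarrow> lo \<le> b - a \<and> b - a \<le> hi)"

(* p-open knot vector: interior multiplicities in {1..p} (end knots have multiplicity p+1 implicitly) *)
definition mult_ok :: "nat \<Rightarrow> real set \<Rightarrow> (real \<Rightarrow> nat) \<Rightarrow> bool" where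
  "mult_ok p Z m \<longleftrightarrow> (\<forall>z\<in>Z. 0 < z \<and> z < 1 \<longrightarrow> 1 \<le> m z \<and> m z \<le> p)"

(* S[p,Xi]: piecewise polynomials of degree <= p on the breakpoint intervals,
   C^(p - m) at an interior breakpoint of multiplicity m.  Only values on [0,1] matter. *)
definition spline_space :: "nat \<Rightarrow> real set \<Rightarrow> (real \<Rightarrow> nat) \<Rightarrow> (real \<Rightarrow> real) set" where
  "spline_space p Z m = {f. \<exists>P :: real \<Rightarrow> real poly.
      (\<forall>a\<in>Z. degree (P a) \<le> p) \<and>
      (\<forall>a b. consec Z a b \<longrightarrow> (\<forall>x\<in>{a..b}. f x = poly (P a) x)) \<and>
      (\<forall>a b c. consec Z a b \<and> consec Z b c \<longrightarrow>
          (\<forall>j \<le> p - m b. poly ((pderiv ^^ j) (P a)) b = poly ((pderiv ^^ j) (P b)) b))}"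

definition tensor_space :: "(real \<Rightarrow> real) set \<Rightarrow> (real \<Rightarrow> real) set \<Rightarrow> (real \<times> real \<Rightarrow> real) set" where
  "tensor_space S1 S2 = {u. \<exists>(k::nat) f g. (\<forall>i<k. f i \<in> S1 \<and> g i \<in> S2) \<and>
      (\<forall>x y. u (x, y) = (\<Sum>i<k. f i x * g i y))}"

(* the 4-periodic parametrization of the boundary of the unit square *)
definition gamma :: "real \<Rightarrow> real \<times> real" where
  "gamma t = (let s = t - 4 * of_int \<lfloor>t / 4\<rfloor> in
     if s < 1 then (0, s) else if s < 2 then (s - 1, 1) else if s < 3 then (1, 3 - s) else (4 - s, 0))"

(* traces on the boundary; only values on the boundary are relevant *)
definition trace_space :: "(real \<times> real \<Rightarrow> real) set \<Rightarrow> (real \<times> real \<Rightarrow> real) set" where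
  "trace_space V = {w. \<exists>v\<in>V. \<forall>t. w (gamma t) = v (gamma t)}"

definition Ck :: "nat \<Rightarrow> (real \<Rightarrow> real) \<Rightarrow> bool" where
  "Ck k f \<longleftrightarrow> (\<exists>D :: nat \<Rightarrow> real \<Rightarrow> real. D 0 = f \<and>
      (\<forall>j<k. \<forall>x. (D j has_real_derivative D (Suc j) x) (at x)) \<and> continuous_on UNIV (D k))"

definition hlev :: "nat \<Rightarrow> real \<Rightarrow> nat \<Rightarrow> real" where
  "hlev L hh l = 4 powr (real L - real l) * hh"

(* W^(l); Zc d l = Z^(d,l), fine breakpoints Zc d L, fine multiplicities mf d *)
definition Wlev :: "nat \<Rightarrow> nat \<Rightarrow> (nat \<Rightarrow> nat \<Rightarrow> real set) \<Rightarrow> (nat \<Rightarrow> real \<Rightarrow> nat) \<Rightarrow> nat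
    \<Rightarrow> (real \<times> real \<Rightarrow> real) set" where
  "Wlev p L Zc mf l =
     (if l = L + 1 then trace_space (tensor_space (spline_space p (Zc 1 L) (mf 1)) (spline_space p (Zc 2 L) (mf 2)))
      else {w \<in> trace_space (tensor_space (spline_space p (Zc 1 l) (\<lambda>_. 1)) (spline_space p (Zc 2 l) (\<lambda>_. 1))).
              Ck (p - 1) (w \<circ> gamma)})"

definition side_dist :: "nat \<Rightarrow> real \<times> real \<Rightarrow> real" where
  "side_dist d z = (if d = 1 then fst z else if d = 2 then 1 - snd z else if d = 3 then 1 - fst z else snd z)"

(* breakpoints of the fine knot vector transversal to side d, measured as distances to that side *)
definition trans_dists :: "(nat \<Rightarrow> real set) \<Rightarrow> nat \<Rightarrow> real set" where
  "trans_dists Zf d = (if d = 1 then Zf 1 else if d = 2 then (\<lambda>z. 1 - z) ` Zf 2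
      else if d = 3 then (\<lambda>z. 1 - z) ` Zf 1 else Zf 2)"

definition eta :: "(nat \<Rightarrow> real set) \<Rightarrow> nat \<Rightarrow> real \<Rightarrow> real" where
  "eta Zf d h = (let D = trans_dists Zf d in Max {e \<in> D. e \<le> max h (Min {e \<in> D. 0 < e})})"

definition theta :: "nat \<Rightarrow> (nat \<Rightarrow> real set) \<Rightarrow> real \<Rightarrow> nat \<Rightarrow> real \<times> real \<Rightarrow> real" where
  "theta p Zf h d z = (max 0 (1 - side_dist d z / eta Zf d h)) ^ p"

definition prev_side :: "nat \<Rightarrow> nat" where
  "prev_side d = (if d = 1 then 4 else d - 1)"

(* vertex extension E^(l, x^(d)) w, with h = hat h_l *)
definition vext :: "nat \<Rightarrow> (nat \<Rightarrow> real set) \<Rightarrow> real \<Rightarrow> nat \<Rightarrow> (real \<times> real \<Rightarrow> real) \<Rightarrow> real \<times> real \<Rightarrow> real" where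
  "vext p Zf h d w z = w (gamma (real d - 1)) * theta p Zf h (prev_side d) z * theta p Zf h d z"

definition pdx :: "(real \<times> real \<Rightarrow> real) \<Rightarrow> real \<times> real \<Rightarrow> real" where
  "pdx u z = deriv (\<lambda>t. u (t, snd z)) (fst z)"

definition pdy :: "(real \<times> real \<Rightarrow> real) \<Rightarrow> real \<times> real \<Rightarrow> real" where
  "pdy u z = deriv (\<lambda>t. u (fst z, t)) (snd z)"

definition h1_inner :: "(real \<times> real \<Rightarrow> real) \<Rightarrow> (real \<times> real \<Rightarrow> real) \<Rightarrow> real" where
  "h1_inner u v = integral (cbox (0, 0) (1, 1)) (\<lambda>z. pdx u z * pdx v z + pdy u z * pdy v z)"

(* ||w||^2_{L2(Gamma^(d))} and |w|^2_{H1(Gamma^(d))} via the unit-speed parametrization gamma *)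
definition side_L2sq :: "nat \<Rightarrow> (real \<times> real \<Rightarrow> real) \<Rightarrow> real" where
  "side_L2sq d w = integral {real d - 1 .. real d} (\<lambda>t. (w (gamma t))\<^sup>2)"

definition side_H1sq :: "nat \<Rightarrow> (real \<times> real \<Rightarrow> real) \<Rightarrow> real" where
  "side_H1sq d w = integral {real d - 1 .. real d} (\<lambda>t. (deriv (\<lambda>s. w (gamma s)) t)\<^sup>2)"

end

theory Submission
  imports Defs
begin

text \<open>After reflecting the square so that the vertex becomes the origin, the vertex extension
  of \<open>w\<close> is \<open>w(x\<^sub>0) \<phi>\<^sub>a(x) \<phi>\<^sub>b(y)\<close> with \<open>\<phi>\<^sub>a(s) = max(0, 1 - s/a)\<^sup>p\<close> and widths \<open>a, b\<close>
  comparable to \<open>h\<^sub>\<ell>\<close>. For two widths \<open>a, c\<close> one has \<open>\<integral> \<phi>\<^sub>a \<phi>\<^sub>c \<le> min a c / (p + 1)\<close> and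
  \<open>\<integral> \<bar>\<phi>\<^sub>a' \<phi>\<^sub>c'\<bar> \<le> 2p / max a c\<close>, so the degree cancels and the \<open>H\<^sup>1\<close> product of two such
  functions is at most a constant times \<open>\<bar>w(x\<^sub>0) q(x\<^sub>0)\<bar>\<close> times the ratio of the smaller to the
  larger grid size. The vertex values are bounded by the one-dimensional trace inequality
  \<open>w(x\<^sub>0)\<^sup>2 \<lesssim> h/p \<bar>w\<bar>\<^sup>2\<^sub>H\<^sub>1 + p/h \<parallel>w\<parallel>\<^sup>2\<^sub>L\<^sub>2\<close> on an adjacent side, which holds because the trace
  of a spline is continuous with a bounded derivative off finitely many points.\<close>

section \<open>Functions with a bounded derivative off a finite set\<close>

lemma square_integral_le:
  fixes f :: "real \<Rightarrow> real"
  assumes f: "f integrable_on {a..b}" and f2: "(\<lambda>x. (f x)^2) integrable_on {a..b}" and "a \<le> b"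
  shows "(integral {a..b} f)^2 \<le> (b - a) * integral {a..b} (\<lambda>x. (f x)^2)"
proof (cases "a = b")
  case False
  with \<open>a \<le> b\<close> have ba: "0 < b - a" by simp
  define I J where "I = integral {a..b} f" and "J = integral {a..b} (\<lambda>x. (f x)^2)"
  define c where "c = I / (b - a)"
  have "((\<lambda>x. (f x)^2 - 2 * c * f x + c^2) has_integral (J - 2 * c * I + (b - a) * c^2)) {a..b}"
    using has_integral_add[OF has_integral_diff[OF integrable_integral[OF f2]
        has_integral_mult_right[OF integrable_integral[OF f]]] has_integral_const_real[of "c^2" a b]]
      \<open>a \<le> b\<close>
    by (simp add: I_def J_def)
  then have "0 \<le> J - 2 * c * I + (b - a) * c^2"
  proof (rule has_integral_nonneg)
    show "0 \<le> (f x)^2 - 2 * c * f x + c^2" for x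
      using zero_le_power2[of "f x - c"] by (simp add: power2_eq_square algebra_simps)
  qed
  moreover have Dc: "(b - a) * c = I"
    using ba by (simp add: c_def)
  ultimately have "0 \<le> J - (b - a) * c^2"
    by (simp add: Dc[symmetric] power2_eq_square algebra_simps)
  then have "(b - a) * ((b - a) * c^2) \<le> (b - a) * J"
    using ba by (intro mult_left_mono) auto
  then show ?thesis
    unfolding I_def [symmetric] J_def [symmetric] Dc [symmetric] by (simp add: power2_eq_square algebra_simps)
qed simp

definition piecewise_bounded_deriv :: "real \<Rightarrow> real \<Rightarrow> (real \<Rightarrow> real) \<Rightarrow> bool" where
  "piecewise_bounded_deriv a b f \<longleftrightarrow> continuous_on {a..b} f \<and>
     (\<exists>S B. finite S \<and> (\<forall>x\<in>{a<..<b} - S. \<exists>D. (f has_real_derivative D) (at x) \<and> \<bar>D\<bar> \<le> B))"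

lemma piecewise_bounded_deriv_fundamental:
  assumes g: "piecewise_bounded_deriv a b g" and x: "x \<in> {a..b}"
  shows "(deriv g has_integral (g x - g a)) {a..x}"
proof -
  from g obtain S B where cont: "continuous_on {a..b} g" and S: "finite S"
    and dS: "\<And>t. t \<in> {a<..<b} - S \<Longrightarrow> \<exists>D. (g has_real_derivative D) (at t)"
    unfolding piecewise_bounded_deriv_def by blast
  show ?thesis
  proof (rule fundamental_theorem_of_calculus_interior_strong[OF S])
    show "a \<le> x" using x by simp
    show "continuous_on {a..x} g" using continuous_on_subset[OF cont] x by auto
    show "(g has_vector_derivative deriv g t) (at t)" if "t \<in> {a<..<x} - S" for t
      using dS[of t] that x DERIV_imp_deriv
      by (fastforce simp: has_real_derivative_iff_has_vector_derivative[symmetric])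
  qed
qed

lemma piecewise_bounded_deriv_square_integrable:
  assumes g: "piecewise_bounded_deriv a b g" and "a \<le> b"
  shows "(\<lambda>t. (deriv g t)^2) integrable_on {a..b}"
proof -
  from g obtain S B where S: "finite S"
    and dS: "\<And>t. t \<in> {a<..<b} - S \<Longrightarrow> \<exists>D. (g has_real_derivative D) (at t) \<and> \<bar>D\<bar> \<le> B"
    unfolding piecewise_bounded_deriv_def by blast
  have "deriv g integrable_on {a..b}"
    using piecewise_bounded_deriv_fundamental[OF g, of b] \<open>a \<le> b\<close> by auto
  then have meas: "(\<lambda>t. (deriv g t)^2) \<in> borel_measurable (lebesgue_on {a..b})"
    using integrable_imp_measurable by measurable
  define S' where "S' = S \<union> {a, b}"
  define G where "G t = (if t \<in> S' then (deriv g t)^2 else B^2)" for t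
  have "G integrable_on {a..b}"
    by (rule integrable_spike[of "\<lambda>t. B^2" _ S']) (auto simp: G_def S'_def S negligible_finite)
  then show ?thesis
  proof (rule measurable_bounded_by_integrable_imp_integrable_real[OF meas])
    show "\<bar>(deriv g t)^2\<bar> \<le> G t" if "t \<in> {a..b}" for t
    proof (cases "t \<in> S'")
      case False
      with that dS[of t] have "\<bar>deriv g t\<bar> \<le> B"
        unfolding S'_def by (auto dest: DERIV_imp_deriv)
      then have "(deriv g t)^2 \<le> B^2"
        by (metis abs_ge_zero order_trans power2_abs power_mono)
      with False show ?thesis by (simp add: G_def)
    qed (simp add: G_def)
  qed auto
qed

lemma square_le_near_left_end:
  fixes g :: "real \<Rightarrow> real"
  assumes g: "piecewise_bounded_deriv a b g" and x: "x \<in> {a..b}"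
  shows "(g a)^2 \<le> 2 * (g x)^2 + 2 * (x - a) * integral {a..b} (\<lambda>t. (deriv g t)^2)"
proof -
  have Dg: "deriv g integrable_on {a..x}"
    using piecewise_bounded_deriv_fundamental[OF g x] by auto
  have Dg2: "(\<lambda>t. (deriv g t)^2) integrable_on {a..b}"
    using piecewise_bounded_deriv_square_integrable[OF g] x by auto
  then have Dg2x: "(\<lambda>t. (deriv g t)^2) integrable_on {a..x}"
    using integrable_on_subinterval x by fastforce
  have "(g x - g a)^2 = (integral {a..x} (deriv g))^2"
    using piecewise_bounded_deriv_fundamental[OF g x] by (simp add: integral_unique)
  also have "\<dots> \<le> (x - a) * integral {a..x} (\<lambda>t. (deriv g t)^2)"
    using Dg Dg2x x by (intro square_integral_le) auto
  also have "\<dots> \<le> (x - a) * integral {a..b} (\<lambda>t. (deriv g t)^2)"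
    using x Dg2x Dg2 by (intro mult_left_mono integral_subset_le) auto
  finally have "(g x - g a)^2 \<le> (x - a) * integral {a..b} (\<lambda>t. (deriv g t)^2)" .
  moreover have "(g a)^2 \<le> 2 * (g x)^2 + 2 * (g x - g a)^2"
    using zero_le_power2[of "g a - 2 * g x"] by (simp add: power2_eq_square algebra_simps)
  ultimately show ?thesis unfolding mult.assoc by linarith
qed

text \<open>Averaging the previous bound over \<open>x \<in> [a, a + e]\<close>.\<close>

lemma boundary_square_le:
  fixes g :: "real \<Rightarrow> real"
  assumes g: "piecewise_bounded_deriv a b g" and e: "0 < e" "e \<le> b - a"
  shows "e * (g a)^2 \<le> 2 * integral {a..b} (\<lambda>t. (g t)^2) + 2 * e^2 * integral {a..b} (\<lambda>t. (deriv g t)^2)"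
proof -
  define H where "H = integral {a..b} (\<lambda>t. (deriv g t)^2)"
  have H: "0 \<le> H"
    unfolding H_def using piecewise_bounded_deriv_square_integrable[OF g] e
    by (intro integral_nonneg) auto
  have g2: "(\<lambda>t. (g t)^2) integrable_on {a..b}"
    using g unfolding piecewise_bounded_deriv_def
    by (intro integrable_continuous_interval continuous_intros) auto
  then have g2e: "(\<lambda>t. (g t)^2) integrable_on {a..a+e}"
    using integrable_on_subinterval e by fastforce
  have point: "(g a)^2 \<le> 2 * (g x)^2 + 2 * e * H" if x: "x \<in> {a..a+e}" for x
  proof -
    have "2 * (x - a) * H \<le> 2 * e * H" using x H by (intro mult_right_mono) auto
    with square_le_near_left_end[OF g, of x] x e show ?thesis unfolding H_def by auto
  qed
  have "e * (g a)^2 = integral {a..a+e} (\<lambda>x. (g a)^2)" using e by simp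
  also have "\<dots> \<le> integral {a..a+e} (\<lambda>x. 2 * (g x)^2 + 2 * e * H)"
    using point g2e by (intro integral_le integrable_add integrable_on_mult_right) auto
  also have "\<dots> = 2 * integral {a..a+e} (\<lambda>x. (g x)^2) + e * (2 * e * H)"
    using e g2e by (subst integral_add) auto
  also have "integral {a..a+e} (\<lambda>x. (g x)^2) \<le> integral {a..b} (\<lambda>t. (g t)^2)"
    using e g2 g2e by (intro integral_subset_le) auto
  finally show ?thesis unfolding H_def by (simp add: power2_eq_square)
qed

lemma trace_inequality:
  fixes g :: "real \<Rightarrow> real" and h H r :: real
  assumes g: "piecewise_bounded_deriv a (a + 1) g" and h: "0 < h" "h \<le> H" and r: "1 \<le> r"
  shows "(g a)^2 \<le> 2 * (1 + H) *
    (h / r * integral {a..a+1} (\<lambda>t. (deriv g t)^2) + r / h * integral {a..a+1} (\<lambda>t. (g t)^2))"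
proof -
  define L D where "L = integral {a..a+1} (\<lambda>t. (g t)^2)"
    and "D = integral {a..a+1} (\<lambda>t. (deriv g t)^2)"
  have L: "0 \<le> L" unfolding L_def using g unfolding piecewise_bounded_deriv_def
    by (intro integral_nonneg integrable_continuous_interval continuous_intros) auto
  have D: "0 \<le> D" unfolding D_def
    using piecewise_bounded_deriv_square_integrable[OF g] by (intro integral_nonneg) auto
  define e where "e = min 1 (h / r)"
  have e: "0 < e" "e \<le> 1" "e \<le> h / r" using h r by (auto simp: e_def)
  have inv_e: "1 / e \<le> (1 + H) * (r / h)"
  proof (cases "h / r \<le> 1")
    case True
    then have "1 / e = r / h" by (simp add: e_def)
    also have "\<dots> \<le> (1 + H) * (r / h)"
      using mult_right_mono[of 1 "1 + H" "r / h"] h r by simp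
    finally show ?thesis .
  next
    case False
    then have "1 / e = 1" by (simp add: e_def)
    also have "1 \<le> H / h" using h by simp
    also have "\<dots> \<le> (1 + H) * r / h"
    proof (rule divide_right_mono)
      have "(1 + H) * 1 \<le> (1 + H) * r" using h r by (intro mult_left_mono) auto
      then show "H \<le> (1 + H) * r" by simp
    qed (use h in simp)
    finally show ?thesis by simp
  qed
  have "e * (g a)^2 \<le> 2 * L + 2 * e^2 * D"
    using boundary_square_le[OF g e(1)] e(2) by (simp add: L_def D_def)
  then have "(g a)^2 \<le> 2 * (1 / e) * L + 2 * e * D"
    using e(1) by (simp add: field_simps power2_eq_square)
  also have "\<dots> \<le> 2 * ((1 + H) * (r / h)) * L + 2 * (h / r) * D"
    using inv_e e L D h r by (intro add_mono mult_mono) auto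
  also have "\<dots> = 2 * (1 + H) * (h / r * D + r / h * L) - 2 * H * (h / r * D)"
    by (simp add: algebra_simps add_divide_distrib)
  also have "\<dots> \<le> 2 * (1 + H) * (h / r * D + r / h * L)"
    using D h r by (simp add: mult_nonneg_nonneg)
  finally show ?thesis unfolding L_def D_def .
qed

lemma piecewise_bounded_deriv_cmult:
  assumes "piecewise_bounded_deriv a b f"
  shows "piecewise_bounded_deriv a b (\<lambda>x. c * f x)"
proof -
  from assms obtain S B where f: "continuous_on {a..b} f" and S: "finite S"
    and d: "\<And>x. x \<in> {a<..<b} - S \<Longrightarrow> \<exists>D. (f has_real_derivative D) (at x) \<and> \<bar>D\<bar> \<le> B"
    unfolding piecewise_bounded_deriv_def by blast
  have "\<exists>D. ((\<lambda>x. c * f x) has_real_derivative D) (at x) \<and> \<bar>D\<bar> \<le> \<bar>c\<bar> * B"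
    if "x \<in> {a<..<b} - S" for x
    using d[OF that] by (auto intro: DERIV_cmult simp: abs_mult mult_left_mono)
  then show ?thesis
    unfolding piecewise_bounded_deriv_def using f S by (blast intro: continuous_on_mult_left)
qed

lemma piecewise_bounded_deriv_add:
  assumes "piecewise_bounded_deriv a b f" "piecewise_bounded_deriv a b g"
  shows "piecewise_bounded_deriv a b (\<lambda>x. f x + g x)"
proof -
  from assms(1) obtain S B where f: "continuous_on {a..b} f" and S: "finite S"
    and df: "\<And>x. x \<in> {a<..<b} - S \<Longrightarrow> \<exists>D. (f has_real_derivative D) (at x) \<and> \<bar>D\<bar> \<le> B"
    unfolding piecewise_bounded_deriv_def by blast
  from assms(2) obtain S' B' where g: "continuous_on {a..b} g" and S': "finite S'"
    and dg: "\<And>x. x \<in> {a<..<b} - S' \<Longrightarrow> \<exists>D. (g has_real_derivative D) (at x) \<and> \<bar>D\<bar> \<le> B'"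
    unfolding piecewise_bounded_deriv_def by blast
  have "\<exists>D. ((\<lambda>x. f x + g x) has_real_derivative D) (at x) \<and> \<bar>D\<bar> \<le> B + B'"
    if "x \<in> {a<..<b} - (S \<union> S')" for x
    using df[of x] dg[of x] that by (auto intro: DERIV_add)
  then show ?thesis unfolding piecewise_bounded_deriv_def using f g S S'
    by (intro conjI continuous_on_add exI[of _ "S \<union> S'"] exI[of _ "B + B'"]) auto
qed

lemma piecewise_bounded_deriv_sum:
  fixes k :: nat
  assumes "\<And>i. i < k \<Longrightarrow> piecewise_bounded_deriv a b (F i)"
  shows "piecewise_bounded_deriv a b (\<lambda>x. \<Sum>i<k. F i x)"
  using assms
proof (induction k)
  case 0
  show ?case unfolding piecewise_bounded_deriv_def by (auto intro!: exI[of _ "{}"] exI[of _ "0::real"])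
next
  case (Suc k)
  then show ?case by (simp add: piecewise_bounded_deriv_add)
qed

lemma piecewise_bounded_deriv_cong:
  assumes "piecewise_bounded_deriv a b f" "\<And>t. t \<in> {a..b} \<Longrightarrow> g t = f t"
  shows "piecewise_bounded_deriv a b g"
proof -
  from assms(1) obtain S B where f: "continuous_on {a..b} f" and S: "finite S"
    and d: "\<And>x. x \<in> {a<..<b} - S \<Longrightarrow> \<exists>D. (f has_real_derivative D) (at x) \<and> \<bar>D\<bar> \<le> B"
    unfolding piecewise_bounded_deriv_def by blast
  have "continuous_on {a..b} g" using f assms(2) continuous_on_eq by metis
  moreover have "\<exists>D. (g has_real_derivative D) (at x) \<and> \<bar>D\<bar> \<le> B" if "x \<in> {a<..<b} - S" for x
  proof -
    from d[OF that] obtain D where D: "(f has_real_derivative D) (at x)" "\<bar>D\<bar> \<le> B" by blast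
    have "(g has_real_derivative D) (at x)"
      by (rule has_field_derivative_transform_within_open[OF D(1), of "{a<..<b}"])
         (use that assms(2) in auto)
    with D show ?thesis by blast
  qed
  ultimately show ?thesis unfolding piecewise_bounded_deriv_def using S by blast
qed

lemma piecewise_bounded_deriv_shift:
  assumes "piecewise_bounded_deriv 0 1 f"
  shows "piecewise_bounded_deriv c (c + 1) (\<lambda>t. f (t - c))"
proof -
  from assms obtain S B where f: "continuous_on {0..1} f" and S: "finite S"
    and d: "\<And>x. x \<in> {0<..<1} - S \<Longrightarrow> \<exists>D. (f has_real_derivative D) (at x) \<and> \<bar>D\<bar> \<le> B"
    unfolding piecewise_bounded_deriv_def by blast
  have "continuous_on {c..c+1} (\<lambda>t. f (t - c))"
    by (rule continuous_on_compose2[OF f]) (auto intro!: continuous_intros)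
  moreover have "\<exists>D. ((\<lambda>t. f (t - c)) has_real_derivative D) (at x) \<and> \<bar>D\<bar> \<le> B"
    if "x \<in> {c<..<c+1} - (\<lambda>s. s + c) ` S" for x
  proof -
    have "x - c \<in> {0<..<1} - S" using that by force
    from d[OF this] obtain D where D: "(f has_real_derivative D) (at (x - c))" "\<bar>D\<bar> \<le> B" by blast
    have "((\<lambda>t. f (t - c)) has_real_derivative D * 1) (at x)"
      by (rule DERIV_chain2[where g="\<lambda>t. t - c", OF D(1)]) (auto intro!: derivative_eq_intros)
    with D show ?thesis by auto
  qed
  ultimately show ?thesis unfolding piecewise_bounded_deriv_def using S by blast
qed

lemma piecewise_bounded_deriv_reflect:
  assumes "piecewise_bounded_deriv 0 1 f"
  shows "piecewise_bounded_deriv c (c + 1) (\<lambda>t. f (c + 1 - t))"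
proof -
  from assms obtain S B where f: "continuous_on {0..1} f" and S: "finite S"
    and d: "\<And>x. x \<in> {0<..<1} - S \<Longrightarrow> \<exists>D. (f has_real_derivative D) (at x) \<and> \<bar>D\<bar> \<le> B"
    unfolding piecewise_bounded_deriv_def by blast
  have "continuous_on {c..c+1} (\<lambda>t. f (c + 1 - t))"
    by (rule continuous_on_compose2[OF f]) (auto intro!: continuous_intros)
  moreover have "\<exists>D. ((\<lambda>t. f (c + 1 - t)) has_real_derivative D) (at x) \<and> \<bar>D\<bar> \<le> B"
    if "x \<in> {c<..<c+1} - (\<lambda>s. c + 1 - s) ` S" for x
  proof -
    have "c + 1 - x \<in> {0<..<1} - S" using that by force
    from d[OF this] obtain D where D: "(f has_real_derivative D) (at (c + 1 - x))" "\<bar>D\<bar> \<le> B" by blast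
    have "((\<lambda>t. f (c + 1 - t)) has_real_derivative D * (-1)) (at x)"
      by (rule DERIV_chain2[where g="\<lambda>t. c + 1 - t", OF D(1)]) (auto intro!: derivative_eq_intros)
    with D show ?thesis by auto
  qed
  ultimately show ?thesis unfolding piecewise_bounded_deriv_def using S by blast
qed



section \<open>Traces of tensor-product splines\<close>

definition knot_set :: "real set \<Rightarrow> bool" where
  "knot_set Z \<longleftrightarrow> finite Z \<and> 0 \<in> Z \<and> 1 \<in> Z \<and> Z \<subseteq> {0..1}"

lemma breakpoints_ok_knot_set: "breakpoints_ok Z lo hi \<Longrightarrow> knot_set Z"
  unfolding breakpoints_ok_def knot_set_def by auto

lemma consec_Min_greater:
  assumes "finite Z" "a \<in> Z" "z \<in> Z" "a < z"
  shows "consec Z a (Min {z \<in> Z. a < z})"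
proof -
  have "finite {z \<in> Z. a < z}" "{z \<in> Z. a < z} \<noteq> {}" using assms by auto
  from Min_in[OF this] Min_le[OF this(1)] show ?thesis
    unfolding consec_def using assms(2) by force
qed

lemma consec_cover:
  assumes Z: "knot_set Z" and x: "x \<in> {0..1}"
  obtains a b where "consec Z a b" "a \<le> x" "x \<le> b" "x \<notin> Z \<Longrightarrow> a < x \<and> x < b"
proof -
  define A where "A = {z \<in> Z. z \<le> x \<and> z < 1}"
  have A: "finite A" "0 \<in> A" using Z x unfolding A_def knot_set_def by auto
  define a where "a = Max A"
  have "a \<in> A" unfolding a_def using A by (intro Max_in) auto
  then have a: "a \<in> Z" "a \<le> x" "a < 1" unfolding A_def by auto
  define b where "b = Min {z \<in> Z. a < z}"
  have ab: "consec Z a b"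
    unfolding b_def using Z a by (intro consec_Min_greater) (auto simp: knot_set_def)
  have "x \<le> b"
  proof (rule ccontr)
    assume "\<not> x \<le> b"
    with ab x have "b \<in> A" unfolding A_def consec_def by auto
    then have "b \<le> a" using Max_ge[OF A(1)] unfolding a_def by blast
    with ab show False unfolding consec_def by simp
  qed
  moreover have "x \<notin> Z \<Longrightarrow> a < x \<and> x < b"
    using a ab \<open>x \<le> b\<close> unfolding consec_def by (auto simp: le_less)
  ultimately show ?thesis using that ab a by blast
qed

lemma continuous_on_spline:
  assumes Z: "knot_set Z" and s: "s \<in> spline_space p Z m"
  shows "continuous_on {0..1} s"
proof -
  from s obtain P :: "real \<Rightarrow> real poly"
    where P: "\<And>a b x. consec Z a b \<Longrightarrow> x \<in> {a..b} \<Longrightarrow> s x = poly (P a) x"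
    unfolding spline_space_def by blast
  have fin: "finite Z" using Z by (simp add: knot_set_def)
  define I where "I = {ab \<in> Z \<times> Z. consec Z (fst ab) (snd ab)}"
  have "finite I" unfolding I_def using fin by (auto intro: finite_subset[of _ "Z \<times> Z"])
  then have "continuous_on (\<Union>ab\<in>I. {fst ab..snd ab}) s"
  proof (rule continuous_on_closed_Union)
    fix ab assume "ab \<in> I"
    then have c: "consec Z (fst ab) (snd ab)" unfolding I_def by auto
    have "continuous_on {fst ab..snd ab} (poly (P (fst ab)))" by (auto intro: continuous_intros)
    then show "continuous_on {fst ab..snd ab} s"
      using P[OF c] continuous_on_eq by metis
  qed auto
  moreover have "{0..1} \<subseteq> (\<Union>ab\<in>I. {fst ab..snd ab})"
  proof
    fix x :: real assume "x \<in> {0..1}"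
    with consec_cover[OF Z this] obtain a b where "consec Z a b" "a \<le> x" "x \<le> b" by blast
    then show "x \<in> (\<Union>ab\<in>I. {fst ab..snd ab})"
      unfolding I_def by (intro UN_I[of "(a, b)"]) (auto simp: consec_def)
  qed
  ultimately show ?thesis by (rule continuous_on_subset)
qed

lemma spline_piecewise_bounded_deriv:
  assumes Z: "knot_set Z" and s: "s \<in> spline_space p Z m"
  shows "piecewise_bounded_deriv 0 1 s"
proof -
  from s obtain P :: "real \<Rightarrow> real poly"
    where P: "\<And>a b x. consec Z a b \<Longrightarrow> x \<in> {a..b} \<Longrightarrow> s x = poly (P a) x"
    unfolding spline_space_def by blast
  have fin: "finite Z" using Z by (simp add: knot_set_def)
  have "\<exists>B. \<forall>x\<in>{0..1}. \<bar>poly (pderiv (P a)) x\<bar> \<le> B" for a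
  proof -
    have "compact (poly (pderiv (P a)) ` {0..1::real})"
      by (rule compact_continuous_image) (auto intro: continuous_intros)
    then obtain B where "\<forall>y\<in>poly (pderiv (P a)) ` {0..1::real}. norm y \<le> B"
      using compact_imp_bounded bounded_iff by metis
    then show ?thesis by auto
  qed
  then obtain Bf where Bf: "\<And>a x. x \<in> {0..1} \<Longrightarrow> \<bar>poly (pderiv (P a)) x\<bar> \<le> Bf a" by metis
  define B where "B = (\<Sum>a\<in>Z. \<bar>Bf a\<bar>)"
  have "\<exists>D. (s has_real_derivative D) (at x) \<and> \<bar>D\<bar> \<le> B" if x: "x \<in> {0<..<1} - Z" for x
  proof -
    from x have "x \<in> {0..1}" by auto
    then obtain a b where "consec Z a b" "a \<le> x" "x \<le> b" "x \<notin> Z \<Longrightarrow> a < x \<and> x < b"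
      by (rule consec_cover[OF Z]) blast
    with x have ab: "consec Z a b" "a < x" "x < b" by auto
    have "(s has_real_derivative poly (pderiv (P a)) x) (at x)"
      by (rule has_field_derivative_transform_within_open[OF poly_DERIV, where S="{a<..<b}"])
         (use ab P[OF ab(1)] in auto)
    moreover have "\<bar>Bf a\<bar> \<le> B"
      unfolding B_def using ab fin by (intro member_le_sum) (auto simp: consec_def)
    ultimately show ?thesis using Bf[of x a] x by force
  qed
  then show ?thesis unfolding piecewise_bounded_deriv_def using continuous_on_spline[OF Z s] fin by blast
qed

lemma gamma_on_side:
  assumes d: "d \<in> {1..4::nat}" and t: "t \<in> {real d - 1 .. real d}"
  shows "gamma t = (if d = 1 then (0, t) else if d = 2 then (t - 1, 1)
                    else if d = 3 then (1, 3 - t) else (4 - t, 0))"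
proof (cases "t < 4")
  case True
  with t d have "\<lfloor>t / 4\<rfloor> = 0" by (auto simp: floor_eq_iff)
  with t d True show ?thesis unfolding gamma_def Let_def by (auto simp: not_less)
next
  case False
  with t d have "t = 4" "d = 4" by auto
  then show ?thesis unfolding gamma_def by simp
qed

lemma tensor_trace_piecewise_bounded_deriv:
  assumes w: "w \<in> trace_space (tensor_space (spline_space p Z1 m1) (spline_space p Z2 m2))"
    and Z1: "knot_set Z1" and Z2: "knot_set Z2" and d: "d \<in> {1..4::nat}"
  shows "piecewise_bounded_deriv (real d - 1) (real d - 1 + 1) (\<lambda>t. w (gamma t))"
proof -
  from w obtain v where v: "v \<in> tensor_space (spline_space p Z1 m1) (spline_space p Z2 m2)"
    and wv: "\<And>t. w (gamma t) = v (gamma t)" unfolding trace_space_def by blast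
  from v obtain k :: nat and f g
    where fg: "\<And>i. i < k \<Longrightarrow> f i \<in> spline_space p Z1 m1 \<and> g i \<in> spline_space p Z2 m2"
      and vfg: "\<And>x y. v (x, y) = (\<Sum>i<k. f i x * g i y)" unfolding tensor_space_def by blast
  have vert: "piecewise_bounded_deriv 0 1 (\<lambda>y. v (c, y))" for c
    unfolding vfg using fg Z2
    by (intro piecewise_bounded_deriv_sum piecewise_bounded_deriv_cmult spline_piecewise_bounded_deriv) auto
  have horiz: "piecewise_bounded_deriv 0 1 (\<lambda>x. v (x, c))" for c
    unfolding vfg mult.commute[of "f _ _"] using fg Z1
    by (intro piecewise_bounded_deriv_sum piecewise_bounded_deriv_cmult spline_piecewise_bounded_deriv) auto
  consider "d = 1" | "d = 2" | "d = 3" | "d = 4" using d by fastforce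
  then show ?thesis
  proof cases
    case 1
    have "piecewise_bounded_deriv 0 (0 + 1) (\<lambda>t. w (gamma t))"
      by (rule piecewise_bounded_deriv_cong[OF piecewise_bounded_deriv_shift[OF vert[of 0], of 0]])
        (subst wv, use 1 d gamma_on_side[of d] in auto)
    with 1 show ?thesis by simp
  next
    case 2
    have "piecewise_bounded_deriv 1 (1 + 1) (\<lambda>t. w (gamma t))"
      by (rule piecewise_bounded_deriv_cong[OF piecewise_bounded_deriv_shift[OF horiz[of 1], of 1]])
        (subst wv, use 2 d gamma_on_side[of d] in auto)
    with 2 show ?thesis by simp
  next
    case 3
    have "piecewise_bounded_deriv 2 (2 + 1) (\<lambda>t. w (gamma t))"
      by (rule piecewise_bounded_deriv_cong[OF piecewise_bounded_deriv_reflect[OF vert[of 1], of 2]])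
        (subst wv, use 3 d gamma_on_side[of d] in auto)
    with 3 show ?thesis by simp
  next
    case 4
    have "piecewise_bounded_deriv 3 (3 + 1) (\<lambda>t. w (gamma t))"
      by (rule piecewise_bounded_deriv_cong[OF piecewise_bounded_deriv_reflect[OF horiz[of 0], of 3]])
        (subst wv, use 4 d gamma_on_side[of d] in auto)
    with 4 show ?thesis by simp
  qed
qed

lemma Wlev_trace_piecewise_bounded_deriv:
  assumes knots: "\<And>e k. e \<in> {1, 2} \<Longrightarrow> k \<in> {1..L} \<Longrightarrow> knot_set (Zc e k)"
    and L: "1 \<le> L" and l: "l \<in> {1..L+1}" and w: "w \<in> Wlev p L Zc mf l" and d: "d \<in> {1..4}"
  shows "piecewise_bounded_deriv (real d - 1) (real d - 1 + 1) (\<lambda>t. w (gamma t))"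
proof (cases "l = L + 1")
  case True
  with w have "w \<in> trace_space (tensor_space (spline_space p (Zc 1 L) (mf 1)) (spline_space p (Zc 2 L) (mf 2)))"
    by (simp add: Wlev_def)
  then show ?thesis
    by (rule tensor_trace_piecewise_bounded_deriv) (use knots L d in auto)
next
  case False
  with w have "w \<in> trace_space (tensor_space (spline_space p (Zc 1 l) (\<lambda>_. 1)) (spline_space p (Zc 2 l) (\<lambda>_. 1)))"
    by (simp add: Wlev_def)
  then show ?thesis
    by (rule tensor_trace_piecewise_bounded_deriv) (use knots l d False in auto)
qed


section \<open>The widths of the cut-off functions\<close>

lemma breakpoints_ok_first_gap:
  assumes "breakpoints_ok D lo hi"
  shows "Min {e \<in> D. 0 < e} \<in> D" "0 < Min {e \<in> D. 0 < e}"
    "lo \<le> Min {e \<in> D. 0 < e}" "Min {e \<in> D. 0 < e} \<le> hi"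
proof -
  have D: "finite D" "0 \<in> D" "1 \<in> D"
    and gap: "\<And>a b. consec D a b \<Longrightarrow> lo \<le> b - a \<and> b - a \<le> hi"
    using assms unfolding breakpoints_ok_def by auto
  have first: "consec D 0 (Min {e \<in> D. 0 < e})"
    using D by (intro consec_Min_greater[of D 0 1]) auto
  with gap[OF first] show "Min {e \<in> D. 0 < e} \<in> D" "0 < Min {e \<in> D. 0 < e}"
    "lo \<le> Min {e \<in> D. 0 < e}" "Min {e \<in> D. 0 < e} \<le> hi"
    unfolding consec_def by auto
qed

lemma breakpoints_ok_lo_le_one:
  assumes "breakpoints_ok D lo hi"
  shows "lo \<le> 1"
proof -
  have "Min {e \<in> D. 0 < e} \<le> 1"
    using breakpoints_ok_first_gap(1)[OF assms] assms unfolding breakpoints_ok_def by auto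
  with breakpoints_ok_first_gap(3)[OF assms] show ?thesis by linarith
qed

lemma eta_bounds:
  assumes bp: "breakpoints_ok (trans_dists Zf d) lo hi"
  shows "lo \<le> eta Zf d h" "eta Zf d h \<le> max h hi" "eta Zf d h = 1 \<or> h - hi < eta Zf d h"
proof -
  define D where "D = trans_dists Zf d"
  define m where "m = Min {e \<in> D. 0 < e}"
  define T where "T = max h m"
  have eta: "eta Zf d h = Max {e \<in> D. e \<le> T}" unfolding eta_def D_def T_def m_def Let_def ..
  have D: "finite D" "1 \<in> D" "D \<subseteq> {0..1}"
    and gap: "\<And>a b. consec D a b \<Longrightarrow> lo \<le> b - a \<and> b - a \<le> hi"
    using bp unfolding breakpoints_ok_def D_def by auto
  note m = breakpoints_ok_first_gap[OF bp, folded D_def, folded m_def]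
  have U: "finite {e \<in> D. e \<le> T}" "m \<in> {e \<in> D. e \<le> T}" using D m unfolding T_def by auto
  have et: "eta Zf d h \<in> D" "eta Zf d h \<le> T" using Max_in[OF U(1)] U(2) unfolding eta by auto
  have "m \<le> eta Zf d h" using Max_ge[OF U] unfolding eta .
  then show "lo \<le> eta Zf d h" using m by simp
  show "eta Zf d h \<le> max h hi" using et m unfolding T_def by auto
  show "eta Zf d h = 1 \<or> h - hi < eta Zf d h"
  proof (cases "eta Zf d h = 1")
    case False
    with et D have "eta Zf d h < 1" by force
    define nx where "nx = Min {z \<in> D. eta Zf d h < z}"
    have nx: "consec D (eta Zf d h) nx"
      unfolding nx_def using D et \<open>eta Zf d h < 1\<close> by (intro consec_Min_greater[of D _ 1]) auto
    have "T < nx"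
    proof (rule ccontr)
      assume "\<not> T < nx"
      with nx have "nx \<in> {e \<in> D. e \<le> T}" unfolding consec_def by auto
      from Max_ge[OF U(1) this] nx show False unfolding eta consec_def by simp
    qed
    with gap[OF nx] show ?thesis unfolding T_def by auto
  qed simp
qed

lemma breakpoints_ok_reflect:
  assumes "breakpoints_ok Z lo hi"
  shows "breakpoints_ok ((\<lambda>z. 1 - z) ` Z) lo hi"
proof -
  have Z: "finite Z" "0 \<in> Z" "1 \<in> Z" "Z \<subseteq> {0..1}"
    and gap: "\<And>a b. consec Z a b \<Longrightarrow> lo \<le> b - a \<and> b - a \<le> hi"
    using assms unfolding breakpoints_ok_def by auto
  have "consec Z (1 - b) (1 - a)" if "consec ((\<lambda>z. 1 - z) ` Z) a b" for a b
  proof -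
    from that have ab: "1 - a \<in> Z" "1 - b \<in> Z" "a < b"
      and between: "\<And>z. z \<in> (\<lambda>z. 1 - z) ` Z \<Longrightarrow> \<not> (a < z \<and> z < b)"
      unfolding consec_def by (auto simp: image_iff)
    show ?thesis unfolding consec_def
    proof (intro conjI ballI)
      fix z assume "z \<in> Z"
      then have "1 - z \<in> (\<lambda>z. 1 - z) ` Z" by auto
      from between[OF this] show "\<not> (1 - b < z \<and> z < 1 - a)" by auto
    qed (use ab in auto)
  qed
  then have "lo \<le> b - a \<and> b - a \<le> hi" if "consec ((\<lambda>z. 1 - z) ` Z) a b" for a b
    using gap that by fastforce
  moreover have "0 \<in> (\<lambda>z. 1 - z) ` Z" "1 \<in> (\<lambda>z. 1 - z) ` Z"
    using Z by (auto simp: image_iff intro: bexI[of _ 1] bexI[of _ 0])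
  ultimately show ?thesis unfolding breakpoints_ok_def using Z by auto
qed

lemma breakpoints_ok_trans_dists:
  assumes "d \<in> {1..4::nat}" "breakpoints_ok (Zf 1) lo hi" "breakpoints_ok (Zf 2) lo hi"
  shows "breakpoints_ok (trans_dists Zf d) lo hi"
  using assms breakpoints_ok_reflect unfolding trans_dists_def by auto

section \<open>The one-dimensional cut-off profile\<close>

definition cutoff :: "nat \<Rightarrow> real \<Rightarrow> real \<Rightarrow> real" where
  "cutoff p a s = (max 0 (1 - s / a))^p"

definition cutoff_deriv :: "nat \<Rightarrow> real \<Rightarrow> real \<Rightarrow> real" where
  "cutoff_deriv p a s = (if s < a then - (real p / a) * (1 - s / a)^(p - 1) else 0)"

text \<open>For \<open>m = min a\<^sub>1 a\<^sub>2\<close>, \<open>p\<^sup>2/(a\<^sub>1 a\<^sub>2)\<close> times this function majorises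
  \<open>\<bar>cutoff_deriv p a\<^sub>1 s * cutoff_deriv p a\<^sub>2 s\<bar>\<close> and, unlike that product, it is continuous,
  so Fubini for continuous integrands applies to it.\<close>

definition cutoff_deriv_envelope :: "nat \<Rightarrow> real \<Rightarrow> real \<Rightarrow> real" where
  "cutoff_deriv_envelope p m s = (max 0 (1 - s / (2 * m)))^(p - 1) * max 0 (min 1 (2 - s / m))"

definition truncated_power :: "nat \<Rightarrow> real \<Rightarrow> real \<Rightarrow> real" where
  "truncated_power k c s = (if s < c then (1 - s / c)^k else 0)"

definition mirror_if :: "bool \<Rightarrow> real \<Rightarrow> real" where
  "mirror_if b s = (if b then 1 - s else s)"

definition tensor_cutoff :: "nat \<Rightarrow> bool \<Rightarrow> bool \<Rightarrow> real \<Rightarrow> real \<Rightarrow> real \<Rightarrow> real \<times> real \<Rightarrow> real" where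
  "tensor_cutoff p cx cy K a b z = K * cutoff p a (mirror_if cx (fst z)) * cutoff p b (mirror_if cy (snd z))"

lemma cutoff_nonneg: "0 \<le> cutoff p a s"
  unfolding cutoff_def by simp

lemma cutoff_le_one: "0 < a \<Longrightarrow> 0 \<le> s \<Longrightarrow> cutoff p a s \<le> 1"
  unfolding cutoff_def by (intro power_le_one) auto

lemma cutoff_deriv_envelope_nonneg: "0 \<le> cutoff_deriv_envelope p m s"
  unfolding cutoff_deriv_envelope_def by simp

lemma continuous_on_cutoff: "0 < a \<Longrightarrow> continuous_on S (cutoff p a)"
  unfolding cutoff_def [abs_def] by (intro continuous_intros) auto

lemma continuous_on_cutoff_deriv_envelope: "0 < m \<Longrightarrow> continuous_on S (cutoff_deriv_envelope p m)"
  unfolding cutoff_deriv_envelope_def [abs_def] by (intro continuous_intros) auto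

lemma continuous_on_mirror_if: "continuous_on S (mirror_if b)"
  by (cases b) (auto simp: mirror_if_def [abs_def] intro!: continuous_intros)

lemma mirror_if_in_unit: "x \<in> {0..1} \<Longrightarrow> mirror_if b x \<in> {0..1}"
  by (auto simp: mirror_if_def)

lemma mirror_if_eq_iff: "mirror_if b x = a \<longleftrightarrow> x = mirror_if b a"
  by (auto simp: mirror_if_def)

lemma has_real_derivative_mirror_if: "(mirror_if b has_real_derivative (if b then -1 else 1)) (at x)"
  by (cases b) (auto simp: mirror_if_def [abs_def] intro!: derivative_eq_intros)

lemma integral_mirror_if: "integral {0..1} (\<lambda>x. f (mirror_if b x)) = integral {0..1} (f :: real \<Rightarrow> real)"
proof (cases b)
  case True
  have "integral {0..1} (\<lambda>x. f (1 - x)) = integral {-1..0} (\<lambda>y. f (y + 1))"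
    using Henstock_Kurzweil_Integration.integral_reflect_real[where f="\<lambda>y. f (y + 1)" and a="-1" and b=0]
    by (simp add: algebra_simps del: Henstock_Kurzweil_Integration.integral_reflect_real)
  also have "\<dots> = integral {0..1} f"
    using integral_shift_real_ivl[where a=0 and b=1 and c=1 and f=f] by simp
  finally show ?thesis using True by (simp add: mirror_if_def)
qed (simp add: mirror_if_def)

lemma has_real_derivative_cutoff:
  assumes p: "1 \<le> p" and a: "0 < a" and s: "s \<noteq> a"
  shows "(cutoff p a has_real_derivative cutoff_deriv p a s) (at s)"
proof (cases "s < a")
  case True
  have "((\<lambda>s. (1 - s / a)^p) has_real_derivative cutoff_deriv p a s) (at s)"
    using True a by (auto intro!: derivative_eq_intros simp: cutoff_deriv_def)
  then show ?thesis
  proof (rule has_field_derivative_transform_within_open[of _ _ _ "{..<a}"])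
    show "(1 - x / a)^p = cutoff p a x" if "x \<in> {..<a}" for x
      using that a by (simp add: cutoff_def field_simps max_def)
  qed (use True in auto)
next
  case False
  with s have "a < s" by simp
  have "((\<lambda>s. 0) has_real_derivative cutoff_deriv p a s) (at s)"
    using \<open>a < s\<close> by (simp add: cutoff_deriv_def)
  then show ?thesis
  proof (rule has_field_derivative_transform_within_open[of _ _ _ "{a<..}"])
    show "0 = cutoff p a x" if "x \<in> {a<..}" for x
      using that a p by (simp add: cutoff_def field_simps max_def)
  qed (use \<open>a < s\<close> in auto)
qed

lemma cutoff_mult_le:
  fixes a1 a2 s :: real
  assumes a: "0 < a1" "0 < a2" and s: "0 \<le> s"
  shows "cutoff p a1 s * cutoff p a2 s \<le> cutoff p (min a1 a2) s"
proof -
  have "cutoff p a1 s * cutoff p a2 s \<le> cutoff p a1 s"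
    using cutoff_le_one[OF a(2) s] cutoff_nonneg by (rule mult_left_le)
  moreover have "cutoff p a1 s * cutoff p a2 s \<le> cutoff p a2 s"
    using cutoff_nonneg cutoff_nonneg cutoff_le_one[OF a(1) s] by (rule mult_left_le_one_le)
  ultimately show ?thesis by (simp add: min_def)
qed

lemma cutoff_deriv_mult_le:
  assumes a: "0 < a1" "0 < a2" and s: "0 \<le> s"
  shows "\<bar>cutoff_deriv p a1 s * cutoff_deriv p a2 s\<bar>
    \<le> real p^2 / (a1 * a2) * cutoff_deriv_envelope p (min a1 a2) s"
proof (cases "s < min a1 a2")
  case False
  then have "cutoff_deriv p a1 s = 0 \<or> cutoff_deriv p a2 s = 0" unfolding cutoff_deriv_def by auto
  then show ?thesis using cutoff_deriv_envelope_nonneg[of p "min a1 a2" s] a by auto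
next
  case True
  define m where "m = min a1 a2"
  have m: "0 < m" "s < m" "m \<le> a1" "m \<le> a2" using True a unfolding m_def by auto
  have x1: "0 \<le> 1 - s / a1" "1 - s / a1 \<le> 1" and x2: "0 \<le> 1 - s / a2" "1 - s / a2 \<le> 1"
    using m s a by (auto simp: field_simps)
  have "(1 - s / a1) * (1 - s / a2) \<le> min (1 - s / a1) (1 - s / a2)"
    using x1 x2 by (auto intro: mult_left_le mult_left_le_one_le)
  also have "\<dots> \<le> 1 - s / m"
    by (cases "a1 \<le> a2") (simp_all add: m_def min_def)
  also have "\<dots> \<le> 1 - s / (2 * m)"
    using m s by (simp add: field_simps)
  finally have "((1 - s / a1) * (1 - s / a2))^(p - 1) \<le> (max 0 (1 - s / (2 * m)))^(p - 1)"
    using x1 x2 by (intro power_mono) auto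
  have "\<bar>cutoff_deriv p a1 s * cutoff_deriv p a2 s\<bar>
      = real p^2 / (a1 * a2) * ((1 - s / a1) * (1 - s / a2))^(p - 1)"
    using m a x1 x2 unfolding cutoff_deriv_def by (simp add: abs_mult power_mult_distrib power2_eq_square)
  also have "\<dots> \<le> real p^2 / (a1 * a2) * (max 0 (1 - s / (2 * m)))^(p - 1)"
    using \<open>((1 - s / a1) * (1 - s / a2))^(p - 1) \<le> _\<close> a by (intro mult_left_mono) auto
  also have "\<dots> = real p^2 / (a1 * a2) * cutoff_deriv_envelope p m s"
    using m unfolding cutoff_deriv_envelope_def by (simp add: field_simps)
  finally show ?thesis unfolding m_def .
qed

lemma cutoff_le_truncated_power: "1 \<le> p \<Longrightarrow> 0 < m \<Longrightarrow> cutoff p m s \<le> truncated_power p m s"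
  by (auto simp: cutoff_def truncated_power_def max_def field_simps power_0_left)

lemma cutoff_deriv_envelope_le_truncated_power:
  assumes "0 < m"
  shows "cutoff_deriv_envelope p m s \<le> truncated_power (p - 1) (2 * m) s"
proof (cases "s < 2 * m")
  case True
  have "cutoff_deriv_envelope p m s \<le> (max 0 (1 - s / (2 * m)))^(p - 1) * 1"
    unfolding cutoff_deriv_envelope_def by (intro mult_left_mono) auto
  also have "max 0 (1 - s / (2 * m)) = 1 - s / (2 * m)" using True assms by (auto simp: field_simps)
  finally show ?thesis unfolding truncated_power_def using True by simp
next
  case False
  then have "max 0 (min 1 (2 - s / m)) = 0" using assms by (auto simp: field_simps)
  then show ?thesis unfolding cutoff_deriv_envelope_def truncated_power_def using False by simp
qed

lemma truncated_power_integral: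
  assumes c: "0 < c"
  shows "truncated_power k c integrable_on {0..1}" "integral {0..1} (truncated_power k c) \<le> c / (k + 1)"
proof -
  define c' where "c' = min 1 c"
  have c': "0 < c'" "c' \<le> 1" "c' \<le> c" using c unfolding c'_def by auto
  define A where "A s = - (c / (k + 1)) * (1 - s / c)^(Suc k)" for s
  have "(A has_real_derivative (1 - s / c)^k) (at s)" for s
  proof -
    have "((\<lambda>s. 1 - s / c) has_real_derivative - (1 / c)) (at s)"
      using c by (auto intro!: derivative_eq_intros)
    then have "(A has_real_derivative - (c / (k + 1)) * ((1 + real k) * (- (1 / c) * (1 - s / c)^k))) (at s)"
      unfolding A_def by (rule DERIV_cmult[OF DERIV_power_Suc])
    moreover have "- (c / (k + 1)) * ((1 + real k) * (- (1 / c) * (1 - s / c)^k))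
        = c / (1 + real k) * (1 + real k) * (1 / c) * (1 - s / c)^k"
      by (simp add: add.commute)
    moreover have "c / (1 + real k) * (1 + real k) * (1 / c) = 1"
      using c by simp
    ultimately show ?thesis by simp
  qed
  then have "((\<lambda>s. (1 - s / c)^k) has_integral (A c' - A 0)) {0..c'}"
    using c' by (intro fundamental_theorem_of_calculus)
      (auto intro: has_field_derivative_at_within simp: has_real_derivative_iff_has_vector_derivative [symmetric])
  then have left: "(truncated_power k c has_integral (A c' - A 0)) {0..c'}"
    by (rule has_integral_spike_finite[of "{c}", rotated 2]) (auto simp: truncated_power_def c'_def)
  have right: "(truncated_power k c has_integral 0) {c'..1}"
    by (rule has_integral_spike_finite[where S="{c'}" and f="\<lambda>s. 0"])
       (use c' in \<open>auto simp: truncated_power_def c'_def\<close>)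
  have all: "(truncated_power k c has_integral (A c' - A 0 + 0)) {0..1}"
    by (rule has_integral_combine[OF _ _ left right]) (use c' in auto)
  then show "truncated_power k c integrable_on {0..1}" by blast
  have "integral {0..1} (truncated_power k c) = c / (k + 1) - c / (k + 1) * (1 - c' / c)^(k + 1)"
    using all by (simp add: integral_unique A_def)
  also have "\<dots> \<le> c / (k + 1)" using c c' by simp
  finally show "integral {0..1} (truncated_power k c) \<le> c / (k + 1)" .
qed

lemma integral_cutoff_mirror_if:
  assumes m: "0 < m" and p: "1 \<le> p"
  shows "0 \<le> integral {0..1} (\<lambda>x. cutoff p m (mirror_if b x))"
    "integral {0..1} (\<lambda>x. cutoff p m (mirror_if b x)) \<le> m / (real p + 1)"
proof -
  have int: "cutoff p m integrable_on {0..1}"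
    using continuous_on_cutoff[OF m] by (rule integrable_continuous_interval)
  show "0 \<le> integral {0..1} (\<lambda>x. cutoff p m (mirror_if b x))"
    unfolding integral_mirror_if using int by (rule integral_nonneg) (simp add: cutoff_nonneg)
  have "integral {0..1} (cutoff p m) \<le> integral {0..1} (truncated_power p m)"
    using m p int truncated_power_integral(1)[OF m] cutoff_le_truncated_power by (intro integral_le) auto
  also have "\<dots> \<le> m / (real p + 1)" using truncated_power_integral(2)[OF m, of p] by (simp add: add.commute)
  finally show "integral {0..1} (\<lambda>x. cutoff p m (mirror_if b x)) \<le> m / (real p + 1)"
    unfolding integral_mirror_if .
qed

lemma integral_cutoff_deriv_envelope_mirror_if:
  assumes m: "0 < m" and p: "1 \<le> p"
  shows "0 \<le> integral {0..1} (\<lambda>x. cutoff_deriv_envelope p m (mirror_if b x))"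
    "integral {0..1} (\<lambda>x. cutoff_deriv_envelope p m (mirror_if b x)) \<le> 2 * m / real p"
proof -
  have int: "cutoff_deriv_envelope p m integrable_on {0..1}"
    using continuous_on_cutoff_deriv_envelope[OF m] by (rule integrable_continuous_interval)
  show "0 \<le> integral {0..1} (\<lambda>x. cutoff_deriv_envelope p m (mirror_if b x))"
    unfolding integral_mirror_if using int by (rule integral_nonneg) (simp add: cutoff_deriv_envelope_nonneg)
  have "integral {0..1} (cutoff_deriv_envelope p m) \<le> integral {0..1} (truncated_power (p - 1) (2 * m))"
    using m int truncated_power_integral(1) cutoff_deriv_envelope_le_truncated_power
    by (intro integral_le) auto
  also have "\<dots> \<le> 2 * m / (real (p - 1) + 1)"
    using truncated_power_integral(2)[of "2 * m" "p - 1"] m by (simp add: add.commute)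
  also have "real (p - 1) + 1 = real p" using p by (simp add: of_nat_diff)
  finally show "integral {0..1} (\<lambda>x. cutoff_deriv_envelope p m (mirror_if b x)) \<le> 2 * m / real p"
    unfolding integral_mirror_if .
qed

lemma cutoff_integral_product_le:
  assumes p: "1 \<le> p" and a: "0 < a1" "0 < a2" and m: "0 < m"
  shows "real p^2 / (a1 * a2) * integral {0..1} (\<lambda>x. cutoff_deriv_envelope p (min a1 a2) (mirror_if cx x))
      * integral {0..1} (\<lambda>y. cutoff p m (mirror_if cy y)) \<le> 2 * (m / max a1 a2)"
proof -
  have min_max: "a1 * a2 = min a1 a2 * max a1 a2" "min a1 a2 \<noteq> 0" "0 < max a1 a2"
    using a by (auto simp: min_def max_def)
  have "real p^2 / (a1 * a2) * integral {0..1} (\<lambda>x. cutoff_deriv_envelope p (min a1 a2) (mirror_if cx x))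
      * integral {0..1} (\<lambda>y. cutoff p m (mirror_if cy y))
    \<le> real p^2 / (a1 * a2) * (2 * min a1 a2 / real p) * (m / (real p + 1))"
    using integral_cutoff_deriv_envelope_mirror_if[of "min a1 a2" p cx] integral_cutoff_mirror_if[OF m p, of cy] a p
    by (intro mult_mono mult_left_mono) auto
  also have "real p^2 / (a1 * a2) * (2 * min a1 a2 / real p) = 2 * real p / max a1 a2"
    using min_max p by (simp add: field_simps power2_eq_square)
  also have "2 * real p / max a1 a2 * (m / (real p + 1)) = real p / (real p + 1) * (2 * (m / max a1 a2))"
    using min_max by (simp add: field_simps)
  also have "\<dots> \<le> 2 * (m / max a1 a2)"
    using min_max m by (intro mult_left_le_one_le) auto
  finally show ?thesis .
qed

section \<open>\<open>H\<^sup>1\<close> products of tensor-product cut-offs\<close>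

lemma has_real_derivative_cutoff_mirror_if:
  assumes "1 \<le> p" "0 < a" "mirror_if b t \<noteq> a"
  shows "((\<lambda>t. cutoff p a (mirror_if b t)) has_real_derivative
    (if b then -1 else 1) * cutoff_deriv p a (mirror_if b t)) (at t)"
  using DERIV_chain2[OF has_real_derivative_cutoff[OF assms] has_real_derivative_mirror_if]
  by (simp add: mult.commute)

lemma pdx_tensor_cutoff:
  assumes "1 \<le> p" "0 < a" "mirror_if cx x \<noteq> a"
  shows "pdx (tensor_cutoff p cx cy K a b) (x, y)
    = K * ((if cx then -1 else 1) * cutoff_deriv p a (mirror_if cx x)) * cutoff p b (mirror_if cy y)"
proof -
  have "((\<lambda>t. K * cutoff p a (mirror_if cx t) * cutoff p b (mirror_if cy y)) has_real_derivative
      K * ((if cx then -1 else 1) * cutoff_deriv p a (mirror_if cx x)) * cutoff p b (mirror_if cy y)) (at x)"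
    by (intro DERIV_cmult_right DERIV_cmult has_real_derivative_cutoff_mirror_if assms)
  then show ?thesis
    unfolding pdx_def tensor_cutoff_def by (simp add: DERIV_imp_deriv)
qed

lemma pdy_tensor_cutoff:
  assumes "1 \<le> p" "0 < b" "mirror_if cy y \<noteq> b"
  shows "pdy (tensor_cutoff p cx cy K a b) (x, y)
    = K * cutoff p a (mirror_if cx x) * ((if cy then -1 else 1) * cutoff_deriv p b (mirror_if cy y))"
proof -
  have "((\<lambda>t. K * cutoff p a (mirror_if cx x) * cutoff p b (mirror_if cy t)) has_real_derivative
      K * cutoff p a (mirror_if cx x) * ((if cy then -1 else 1) * cutoff_deriv p b (mirror_if cy y))) (at y)"
    by (intro DERIV_cmult has_real_derivative_cutoff_mirror_if assms)
  then show ?thesis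
    unfolding pdy_def tensor_cutoff_def by (simp add: DERIV_imp_deriv)
qed

lemma grad_product_tensor_cutoff_le:
  fixes K1 K2 :: real
  assumes p: "1 \<le> p" and pos: "0 < a1" "0 < a2" "0 < b1" "0 < b2"
    and x: "x \<in> {0..1}" "mirror_if cx x \<notin> {a1, a2}"
    and y: "y \<in> {0..1}" "mirror_if cy y \<notin> {b1, b2}"
  defines "u \<equiv> tensor_cutoff p cx cy K1 a1 b1" and "v \<equiv> tensor_cutoff p cx cy K2 a2 b2"
  shows "\<bar>pdx u (x, y) * pdx v (x, y) + pdy u (x, y) * pdy v (x, y)\<bar> \<le> \<bar>K1 * K2\<bar> *
    (real p^2 / (a1 * a2) * cutoff_deriv_envelope p (min a1 a2) (mirror_if cx x) * cutoff p (min b1 b2) (mirror_if cy y)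
     + cutoff p (min a1 a2) (mirror_if cx x) * (real p^2 / (b1 * b2) * cutoff_deriv_envelope p (min b1 b2) (mirror_if cy y)))"
proof -
  define X Y where "X = mirror_if cx x" and "Y = mirror_if cy y"
  have XY: "0 \<le> X" "0 \<le> Y" using x y mirror_if_in_unit unfolding X_def Y_def by force+
  have "\<bar>pdx u (x, y) * pdx v (x, y)\<bar>
      = \<bar>K1 * K2\<bar> * \<bar>cutoff_deriv p a1 X * cutoff_deriv p a2 X\<bar> * (cutoff p b1 Y * cutoff p b2 Y)"
    using x unfolding u_def v_def X_def Y_def
    by (simp add: pdx_tensor_cutoff[OF p] pos abs_mult cutoff_nonneg)
  also have "\<dots> \<le> \<bar>K1 * K2\<bar> * (real p^2 / (a1 * a2) * cutoff_deriv_envelope p (min a1 a2) X) * cutoff p (min b1 b2) Y"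
    using XY pos
    by (intro mult_mono mult_left_mono cutoff_deriv_mult_le cutoff_mult_le)
      (auto simp: cutoff_nonneg cutoff_deriv_envelope_nonneg)
  finally have dx: "\<bar>pdx u (x, y) * pdx v (x, y)\<bar>
      \<le> \<bar>K1 * K2\<bar> * (real p^2 / (a1 * a2) * cutoff_deriv_envelope p (min a1 a2) X) * cutoff p (min b1 b2) Y" .
  have "\<bar>pdy u (x, y) * pdy v (x, y)\<bar>
      = \<bar>K1 * K2\<bar> * (cutoff p a1 X * cutoff p a2 X) * \<bar>cutoff_deriv p b1 Y * cutoff_deriv p b2 Y\<bar>"
    using y unfolding u_def v_def X_def Y_def
    by (simp add: pdy_tensor_cutoff[OF p] pos abs_mult cutoff_nonneg)
  also have "\<dots> \<le> \<bar>K1 * K2\<bar> * cutoff p (min a1 a2) X * (real p^2 / (b1 * b2) * cutoff_deriv_envelope p (min b1 b2) Y)"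
    using XY pos
    by (intro mult_mono mult_left_mono cutoff_deriv_mult_le cutoff_mult_le)
      (auto simp: cutoff_nonneg cutoff_deriv_envelope_nonneg)
  finally have dy: "\<bar>pdy u (x, y) * pdy v (x, y)\<bar>
      \<le> \<bar>K1 * K2\<bar> * cutoff p (min a1 a2) X * (real p^2 / (b1 * b2) * cutoff_deriv_envelope p (min b1 b2) Y)" .
  have "\<bar>pdx u (x, y) * pdx v (x, y) + pdy u (x, y) * pdy v (x, y)\<bar>
      \<le> \<bar>pdx u (x, y) * pdx v (x, y)\<bar> + \<bar>pdy u (x, y) * pdy v (x, y)\<bar>"
    by (rule abs_triangle_ineq)
  with dx dy show ?thesis unfolding X_def [symmetric] Y_def [symmetric] by (simp add: algebra_simps)
qed

lemma negligible_fst_eq: "negligible {z :: real \<times> real. fst z = c}"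
proof -
  have "{z :: real \<times> real. fst z = c} = {z. z \<bullet> (1, 0) = c}" by auto
  moreover have "(1 :: real, 0 :: real) \<in> Basis" by (simp add: Basis_prod_def)
  ultimately show ?thesis using negligible_standard_hyperplane by metis
qed

lemma negligible_snd_eq: "negligible {z :: real \<times> real. snd z = c}"
proof -
  have "{z :: real \<times> real. snd z = c} = {z. z \<bullet> (0, 1) = c}" by auto
  moreover have "(0 :: real, 1 :: real) \<in> Basis" by (simp add: Basis_prod_def)
  ultimately show ?thesis using negligible_standard_hyperplane by metis
qed

lemma has_integral_unit_square_tensor:
  fixes \<alpha> \<beta> :: "real \<Rightarrow> real"
  assumes \<alpha>: "continuous_on {0..1} \<alpha>" and \<beta>: "continuous_on {0..1} \<beta>"
  shows "((\<lambda>z. \<alpha> (fst z) * \<beta> (snd z)) has_integral integral {0..1} \<alpha> * integral {0..1} \<beta>)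
    (cbox (0, 0) (1, 1))"
proof -
  have "fst ` cbox (0::real, 0::real) (1, 1) \<subseteq> {0..1}" "snd ` cbox (0::real, 0::real) (1, 1) \<subseteq> {0..1}"
    by (auto simp: cbox_Pair_eq)
  then have cont: "continuous_on (cbox (0, 0) (1, 1)) (\<lambda>z. \<alpha> (fst z) * \<beta> (snd z))"
    by (intro continuous_on_mult continuous_on_compose2[OF \<alpha>] continuous_on_compose2[OF \<beta>]
        continuous_intros) auto
  have "integral (cbox (0, 0) (1, 1)) (\<lambda>z. \<alpha> (fst z) * \<beta> (snd z))
      = integral (cbox 0 1) (\<lambda>x. integral (cbox 0 1) (\<lambda>y. \<alpha> x * \<beta> y))"
    using integral_prod_continuous[OF cont] by simp
  also have "\<dots> = integral {0..1} \<alpha> * integral {0..1} \<beta>" by simp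
  finally show ?thesis using integrable_continuous[OF cont] by (simp add: has_integral_iff)
qed

lemma abs_integral_le_integral_off_negligible:
  fixes f g :: "'a :: euclidean_space \<Rightarrow> real"
  assumes g: "g integrable_on S" and N: "negligible N"
    and le: "\<And>z. z \<in> S - N \<Longrightarrow> \<bar>f z\<bar> \<le> g z" and nonneg: "\<And>z. z \<in> S \<Longrightarrow> 0 \<le> g z"
  shows "\<bar>integral S f\<bar> \<le> integral S g"
proof (cases "f integrable_on S")
  case False
  then show ?thesis using g nonneg by (simp add: not_integrable_integral integral_nonneg)
next
  case True
  define f' where "f' z = (if z \<in> N then 0 else f z)" for z
  have "integral S f = integral S f'"
    by (rule integral_spike[OF N]) (auto simp: f'_def)
  also have "norm \<dots> \<le> integral S g"
  proof (rule integral_norm_bound_integral[OF _ g])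
    show "f' integrable_on S" by (rule integrable_spike[OF True N]) (auto simp: f'_def)
    show "norm (f' z) \<le> g z" if "z \<in> S" for z using le[of z] nonneg[OF that] that by (auto simp: f'_def)
  qed
  finally show ?thesis by simp
qed

lemma h1_inner_tensor_cutoff_le:
  assumes p: "1 \<le> p" and pos: "0 < a1" "0 < a2" "0 < b1" "0 < b2"
  shows "\<bar>h1_inner (tensor_cutoff p cx cy K1 a1 b1) (tensor_cutoff p cx cy K2 a2 b2)\<bar>
    \<le> \<bar>K1 * K2\<bar> * (2 * (min b1 b2 / max a1 a2) + 2 * (min a1 a2 / max b1 b2))"
proof -
  define ma mb where "ma = min a1 a2" and "mb = min b1 b2"
  have m: "0 < ma" "0 < mb" using pos unfolding ma_def mb_def by auto
  define A B where "A = real p^2 / (a1 * a2)" and "B = real p^2 / (b1 * b2)"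
  define \<alpha> \<beta> \<gamma> \<delta> where "\<alpha> x = A * cutoff_deriv_envelope p ma (mirror_if cx x)"
    and "\<beta> y = cutoff p mb (mirror_if cy y)" and "\<gamma> x = cutoff p ma (mirror_if cx x)"
    and "\<delta> y = B * cutoff_deriv_envelope p mb (mirror_if cy y)" for x y
  define g where "g z = \<bar>K1 * K2\<bar> * (\<alpha> (fst z) * \<beta> (snd z) + \<gamma> (fst z) * \<delta> (snd z))" for z
  define N where "N = {z. fst z = mirror_if cx a1} \<union> {z. fst z = mirror_if cx a2}
    \<union> {z. snd z = mirror_if cy b1} \<union> {z. snd z = mirror_if cy b2}"
  have mirror_cont: "continuous_on {0..1} (\<lambda>x. f (mirror_if b x))" if "continuous_on UNIV f" for f b
    by (rule continuous_on_compose2[OF that continuous_on_mirror_if]) auto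
  have "continuous_on {0..1} \<alpha>" "continuous_on {0..1} \<beta>" "continuous_on {0..1} \<gamma>" "continuous_on {0..1} \<delta>"
    unfolding \<alpha>_def \<beta>_def \<gamma>_def \<delta>_def using m
    by (auto intro!: continuous_on_mult_left mirror_cont continuous_on_cutoff continuous_on_cutoff_deriv_envelope)
  then have g: "(g has_integral \<bar>K1 * K2\<bar> *
      (integral {0..1} \<alpha> * integral {0..1} \<beta> + integral {0..1} \<gamma> * integral {0..1} \<delta>)) (cbox (0, 0) (1, 1))"
    unfolding g_def by (intro has_integral_mult_right has_integral_add has_integral_unit_square_tensor)
  have "\<bar>h1_inner (tensor_cutoff p cx cy K1 a1 b1) (tensor_cutoff p cx cy K2 a2 b2)\<bar>
      \<le> integral (cbox (0, 0) (1, 1)) g"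
    unfolding h1_inner_def
  proof (rule abs_integral_le_integral_off_negligible)
    show "g integrable_on cbox (0, 0) (1, 1)" using g by blast
    show "negligible N" unfolding N_def by (intro negligible_Un negligible_fst_eq negligible_snd_eq)
    show "0 \<le> g z" for z
      unfolding g_def \<alpha>_def \<beta>_def \<gamma>_def \<delta>_def A_def B_def using pos
      by (intro mult_nonneg_nonneg add_nonneg_nonneg) (auto simp: cutoff_nonneg cutoff_deriv_envelope_nonneg)
  next
    fix z assume "z \<in> cbox (0, 0) (1, 1) - N"
    then show "\<bar>pdx (tensor_cutoff p cx cy K1 a1 b1) z * pdx (tensor_cutoff p cx cy K2 a2 b2) z
        + pdy (tensor_cutoff p cx cy K1 a1 b1) z * pdy (tensor_cutoff p cx cy K2 a2 b2) z\<bar> \<le> g z"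
      using grad_product_tensor_cutoff_le[OF p pos, of "fst z" cx "snd z" cy K1 K2]
      unfolding g_def \<alpha>_def \<beta>_def \<gamma>_def \<delta>_def A_def B_def ma_def mb_def N_def
      by (auto simp: cbox_Pair_eq mirror_if_eq_iff mult.assoc)
  qed
  also have "integral (cbox (0, 0) (1, 1)) g
      = \<bar>K1 * K2\<bar> * (integral {0..1} \<alpha> * integral {0..1} \<beta> + integral {0..1} \<gamma> * integral {0..1} \<delta>)"
    using g by (rule integral_unique)
  also have "\<dots> \<le> \<bar>K1 * K2\<bar> * (2 * (mb / max a1 a2) + 2 * (ma / max b1 b2))"
  proof (intro mult_left_mono add_mono)
    show "integral {0..1} \<alpha> * integral {0..1} \<beta> \<le> 2 * (mb / max a1 a2)"
      using cutoff_integral_product_le[OF p pos(1,2) m(2), of cx cy]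
      unfolding \<alpha>_def \<beta>_def A_def ma_def by simp
    show "integral {0..1} \<gamma> * integral {0..1} \<delta> \<le> 2 * (ma / max b1 b2)"
      using cutoff_integral_product_le[OF p pos(3,4) m(1), of cy cx]
      unfolding \<gamma>_def \<delta>_def B_def mb_def by (simp add: mult_ac)
  qed simp
  finally show ?thesis unfolding ma_def mb_def .
qed

section \<open>Vertex extensions on a hierarchy of knot vectors\<close>

lemma min_div_max_le:
  fixes \<kappa> C h1 h2 x1 y1 x2 y2 :: real
  assumes "0 < \<kappa>" "0 < h1" "0 < h2" "\<kappa> * h1 \<le> x1" "\<kappa> * h2 \<le> y1"
    "0 < x2" "0 < y2" "x2 \<le> C * h1" "y2 \<le> C * h2"
  shows "min x2 y2 / max x1 y1 \<le> C / \<kappa> * (min h1 h2 / max h1 h2)"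
proof -
  have "min x2 y2 / max x1 y1 \<le> C * min h1 h2 / (\<kappa> * max h1 h2)"
  proof (rule frac_le)
    show "min x2 y2 \<le> C * min h1 h2" using assms by (simp add: min_def)
    then show "0 \<le> C * min h1 h2" using assms by linarith
    show "0 < \<kappa> * max h1 h2" using assms by simp
    show "\<kappa> * max h1 h2 \<le> max x1 y1" using assms by (auto simp: max_def)
  qed
  then show ?thesis by simp
qed

text \<open>The vertex \<open>x\<^sup>(\<^sup>d\<^sup>)\<close> is the common endpoint of the side \<open>vert_side d\<close> (where \<open>x\<close> is constant)
  and the side \<open>horiz_side d\<close> (where \<open>y\<close> is constant); \<open>right_vertex d\<close> and \<open>top_vertex d\<close> record
  whether the distances to these sides are \<open>1 - x\<close> and \<open>1 - y\<close> rather than \<open>x\<close> and \<open>y\<close>.\<close>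

definition vert_side :: "nat \<Rightarrow> nat" where
  "vert_side d = (if d \<le> 2 then 1 else 3)"

definition horiz_side :: "nat \<Rightarrow> nat" where
  "horiz_side d = (if d = 2 \<or> d = 3 then 2 else 4)"

definition right_vertex :: "nat \<Rightarrow> bool" where
  "right_vertex d \<longleftrightarrow> 3 \<le> d"

definition top_vertex :: "nat \<Rightarrow> bool" where
  "top_vertex d \<longleftrightarrow> d = 2 \<or> d = 3"

lemma vext_eq_tensor_cutoff:
  assumes "d \<in> {1..4}"
  shows "vext p Zf h d w = tensor_cutoff p (right_vertex d) (top_vertex d) (w (gamma (real d - 1)))
    (eta Zf (vert_side d) h) (eta Zf (horiz_side d) h)"
proof
  fix z :: "real \<times> real"
  consider "d = 1" | "d = 2" | "d = 3" | "d = 4" using assms by fastforce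
  then show "vext p Zf h d w z = tensor_cutoff p (right_vertex d) (top_vertex d) (w (gamma (real d - 1)))
    (eta Zf (vert_side d) h) (eta Zf (horiz_side d) h) z"
    by cases (simp_all add: vext_def theta_def prev_side_def side_dist_def tensor_cutoff_def cutoff_def
      mirror_if_def vert_side_def horiz_side_def right_vertex_def top_vertex_def mult_ac)
qed

locale knot_hierarchy =
  fixes C3 c0 hh :: real and L :: nat and Zc :: "nat \<Rightarrow> nat \<Rightarrow> real set"
  assumes C3_pos: "0 < C3" and c0_pos: "0 < c0" and hh_pos: "0 < hh" and L_pos: "1 \<le> L"
    and fine: "\<And>e. e \<in> {1, 2} \<Longrightarrow> breakpoints_ok (Zc e L) (C3 * hh) hh"
    and coarse: "\<And>e k. e \<in> {1, 2} \<Longrightarrow> k \<in> {1..L} \<Longrightarrow>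
      breakpoints_ok (Zc e k) (c0 * hlev L hh k) (hlev L hh k)"
begin

lemma knot_set_Zc: "e \<in> {1, 2} \<Longrightarrow> k \<in> {1..L} \<Longrightarrow> knot_set (Zc e k)"
  using coarse breakpoints_ok_knot_set by blast

lemma hlev_pos: "0 < hlev L hh l"
  unfolding hlev_def using hh_pos by simp

lemma hlev_cases:
  assumes l: "l \<in> {1..L+1}"
  shows "hlev L hh l = hh / 4 \<or> (hh \<le> hlev L hh l \<and> c0 * hlev L hh l \<le> 1)"
proof (cases "l = L + 1")
  case True
  then have "hlev L hh l = 4 powr (-1) * hh" unfolding hlev_def by simp
  then show ?thesis by (simp add: powr_minus_divide)
next
  case False
  with l have l': "l \<in> {1..L}" by auto
  have "1 * hh \<le> hlev L hh l"
    unfolding hlev_def using l' hh_pos by (intro mult_right_mono ge_one_powr_ge_zero) auto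
  moreover have "c0 * hlev L hh l \<le> 1"
    using breakpoints_ok_lo_le_one[OF coarse[OF _ l', of 1]] by simp
  ultimately show ?thesis by simp
qed

lemma hlev_le: "l \<in> {1..L+1} \<Longrightarrow> hlev L hh l \<le> 1 / c0 + 1 / C3"
proof -
  assume l: "l \<in> {1..L+1}"
  have "hh \<le> 1 / C3"
    using breakpoints_ok_lo_le_one[OF fine[of 1]] C3_pos by (simp add: field_simps)
  moreover have "c0 * hlev L hh l \<le> 1 \<Longrightarrow> hlev L hh l \<le> 1 / c0"
    using c0_pos by (simp add: field_simps)
  moreover have "0 < 1 / c0" "0 < 1 / C3" using c0_pos C3_pos by auto
  ultimately show ?thesis
    using hlev_cases[OF l] hh_pos by linarith
qed

lemma eta_level_bounds:
  assumes l: "l \<in> {1..L+1}" and e: "e \<in> {1..4}"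
  shows "min (C3 / 2) (min c0 (1 / 2)) * hlev L hh l \<le> eta (\<lambda>e. Zc e L) e (hlev L hh l)"
    and "eta (\<lambda>e. Zc e L) e (hlev L hh l) \<le> 4 * hlev L hh l"
proof -
  define h where "h = hlev L hh l"
  define \<eta> where "\<eta> = eta (\<lambda>e. Zc e L) e h"
  define \<kappa> where "\<kappa> = min (C3 / 2) (min c0 (1 / 2))"
  have "breakpoints_ok (trans_dists (\<lambda>e. Zc e L) e) (C3 * hh) hh"
    using e fine by (intro breakpoints_ok_trans_dists) auto
  note \<eta> = eta_bounds[OF this, of h, folded \<eta>_def]
  have h: "0 < h" "h = hh / 4 \<or> (hh \<le> h \<and> c0 * h \<le> 1)"
    unfolding h_def using hlev_pos hlev_cases[OF l] by auto
  show "\<eta> \<le> 4 * h" using \<eta>(2) h hh_pos by auto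
  have \<kappa>: "\<kappa> * h \<le> C3 / 2 * h" "\<kappa> * h \<le> c0 * h" "\<kappa> * h \<le> h / 2"
    unfolding \<kappa>_def using h by (auto intro: mult_right_mono)
  show "\<kappa> * h \<le> \<eta>"
  proof (cases "h \<le> 2 * hh")
    case True
    then have "C3 / 2 * h \<le> C3 * hh" using C3_pos by simp
    with \<kappa> \<eta>(1) show ?thesis by linarith
  next
    case False
    with h hh_pos have "c0 * h \<le> 1" by auto
    with False \<kappa> \<eta>(3) show ?thesis by linarith
  qed
qed

lemma vertex_value_square_le:
  assumes p: "1 \<le> p" and l: "l \<in> {1..L+1}" and d: "d \<in> {1..4}" and w: "w \<in> Wlev p L Zc mf l"
  shows "(w (gamma (real d - 1)))^2 \<le> 2 * (1 + (1 / c0 + 1 / C3)) *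
    (hlev L hh l / real p * side_H1sq d w + real p / hlev L hh l * side_L2sq d w)"
proof -
  have "piecewise_bounded_deriv (real d - 1) (real d - 1 + 1) (\<lambda>t. w (gamma t))"
    by (rule Wlev_trace_piecewise_bounded_deriv[OF knot_set_Zc L_pos l w d])
  from trace_inequality[OF this hlev_pos hlev_le[OF l]] p show ?thesis
    unfolding side_H1sq_def side_L2sq_def by simp
qed

lemma h1_inner_vext_le_vertex_values:
  assumes p: "1 \<le> p" and l: "l \<in> {1..L+1}" and n: "n \<in> {1..L+1}" and d: "d \<in> {1..4}"
  shows "\<bar>h1_inner (vext p (\<lambda>e. Zc e L) (hlev L hh l) d w) (vext p (\<lambda>e. Zc e L) (hlev L hh n) d q)\<bar>
    \<le> \<bar>w (gamma (real d - 1)) * q (gamma (real d - 1))\<bar> * (16 / min (C3 / 2) (min c0 (1 / 2)))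
      * (min (hlev L hh l) (hlev L hh n) / max (hlev L hh l) (hlev L hh n))"
proof -
  define \<kappa> where "\<kappa> = min (C3 / 2) (min c0 (1 / 2))"
  define hl hn where "hl = hlev L hh l" and "hn = hlev L hh n"
  define al an bl bn where "al = eta (\<lambda>e. Zc e L) (vert_side d) hl"
    and "an = eta (\<lambda>e. Zc e L) (vert_side d) hn"
    and "bl = eta (\<lambda>e. Zc e L) (horiz_side d) hl"
    and "bn = eta (\<lambda>e. Zc e L) (horiz_side d) hn"
  have sides: "vert_side d \<in> {1..4}" "horiz_side d \<in> {1..4}"
    by (auto simp: vert_side_def horiz_side_def)
  note bounds = eta_level_bounds[OF l sides(1)] eta_level_bounds[OF n sides(1)]
    eta_level_bounds[OF l sides(2)] eta_level_bounds[OF n sides(2)]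
  have \<kappa>: "0 < \<kappa>" unfolding \<kappa>_def using C3_pos c0_pos by simp
  have h: "0 < hl" "0 < hn" unfolding hl_def hn_def by (rule hlev_pos)+
  have \<eta>: "\<kappa> * hl \<le> al" "al \<le> 4 * hl" "\<kappa> * hn \<le> an" "an \<le> 4 * hn"
      "\<kappa> * hl \<le> bl" "bl \<le> 4 * hl" "\<kappa> * hn \<le> bn" "bn \<le> 4 * hn"
    using bounds unfolding \<kappa>_def hl_def hn_def al_def an_def bl_def bn_def by auto
  have pos: "0 < al" "0 < an" "0 < bl" "0 < bn"
    using \<eta> \<kappa> h by (auto intro: less_le_trans[OF mult_pos_pos])
  have "\<bar>h1_inner (vext p (\<lambda>e. Zc e L) hl d w) (vext p (\<lambda>e. Zc e L) hn d q)\<bar>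
      \<le> \<bar>w (gamma (real d - 1)) * q (gamma (real d - 1))\<bar> *
        (2 * (min bl bn / max al an) + 2 * (min al an / max bl bn))"
    unfolding vext_eq_tensor_cutoff[OF d] al_def an_def bl_def bn_def
    by (rule h1_inner_tensor_cutoff_le[OF p pos[unfolded al_def an_def bl_def bn_def]])
  also have "\<dots> \<le> \<bar>w (gamma (real d - 1)) * q (gamma (real d - 1))\<bar> *
      (2 * (4 / \<kappa> * (min hl hn / max hl hn)) + 2 * (4 / \<kappa> * (min hl hn / max hl hn)))"
    using min_div_max_le[OF \<kappa> h \<eta>(1,3) pos(3,4) \<eta>(6,8)]
      min_div_max_le[OF \<kappa> h \<eta>(5,7) pos(1,2) \<eta>(2,4)]
    by (intro mult_left_mono add_mono) auto
  finally show ?thesis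
    unfolding \<kappa>_def [symmetric] hl_def [symmetric] hn_def [symmetric] by (simp add: algebra_simps)
qed

lemma h1_inner_vext_le:
  assumes p: "1 \<le> p" and l: "l \<in> {1..L+1}" and n: "n \<in> {1..L+1}" and d: "d \<in> {1..4}"
    and w: "w \<in> Wlev p L Zc mf l" and q: "q \<in> Wlev p L Zc mf n"
  shows "\<bar>h1_inner (vext p (\<lambda>e. Zc e L) (hlev L hh l) d w) (vext p (\<lambda>e. Zc e L) (hlev L hh n) d q)\<bar>
    \<le> 16 * (1 + (1 / c0 + 1 / C3)) / min (C3 / 2) (min c0 (1 / 2))
      * (min (hlev L hh l) (hlev L hh n) / max (hlev L hh l) (hlev L hh n))
      * (hlev L hh l / real p * side_H1sq d w + hlev L hh n / real p * side_H1sq d q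
         + real p / hlev L hh l * side_L2sq d w + real p / hlev L hh n * side_L2sq d q)"
proof -
  define \<kappa> where "\<kappa> = min (C3 / 2) (min c0 (1 / 2))"
  define r where "r = min (hlev L hh l) (hlev L hh n) / max (hlev L hh l) (hlev L hh n)"
  define Kw Kq where "Kw = w (gamma (real d - 1))" and "Kq = q (gamma (real d - 1))"
  define Aw Aq where "Aw = hlev L hh l / real p * side_H1sq d w + real p / hlev L hh l * side_L2sq d w"
    and "Aq = hlev L hh n / real p * side_H1sq d q + real p / hlev L hh n * side_L2sq d q"
  have factor: "0 \<le> 16 / \<kappa> * r"
    unfolding \<kappa>_def r_def using C3_pos c0_pos hlev_pos[of l] hlev_pos[of n] by simp
  define M where "M = 1 + (1 / c0 + 1 / C3)"
  have "2 * \<bar>Kw * Kq\<bar> \<le> Kw^2 + Kq^2"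
    using sum_squares_bound[of "\<bar>Kw\<bar>" "\<bar>Kq\<bar>"] by (simp add: abs_mult power2_abs)
  also have "\<dots> \<le> 2 * M * Aw + 2 * M * Aq"
    unfolding Kw_def Kq_def Aw_def Aq_def M_def
    by (rule add_mono[OF vertex_value_square_le[OF p l d w] vertex_value_square_le[OF p n d q]])
  finally have K: "\<bar>Kw * Kq\<bar> \<le> M * (Aw + Aq)" by (simp add: distrib_left)
  have "\<bar>h1_inner (vext p (\<lambda>e. Zc e L) (hlev L hh l) d w) (vext p (\<lambda>e. Zc e L) (hlev L hh n) d q)\<bar>
      \<le> \<bar>Kw * Kq\<bar> * (16 / \<kappa> * r)"
    using h1_inner_vext_le_vertex_values[OF p l n d, of w q]
    unfolding \<kappa>_def r_def Kw_def Kq_def by (simp add: mult.assoc)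
  also have "\<dots> \<le> M * (Aw + Aq) * (16 / \<kappa> * r)"
    using K factor by (rule mult_right_mono)
  finally show ?thesis
    unfolding \<kappa>_def [symmetric] r_def [symmetric] M_def [symmetric] Aw_def Aq_def
    by (simp add: algebra_simps)
qed

end


theorem mainTheorem10:
  fixes C3 c0 :: real
  assumes "0 < C3" and "0 < c0"
  shows "\<exists>c::real. \<forall>(p::nat) (hh::real) (L::nat) (Zc::nat \<Rightarrow> nat \<Rightarrow> real set)
      (mf::nat \<Rightarrow> real \<Rightarrow> nat) (l::nat) (n::nat) (d::nat)
      (w::real \<times> real \<Rightarrow> real) (q::real \<times> real \<Rightarrow> real).
    1 \<le> p \<and> 0 < hh \<and> 1 \<le> L \<and>
    (\<forall>e\<in>{1,2}. breakpoints_ok (Zc e L) (C3 * hh) hh \<and> mult_ok p (Zc e L) (mf e)) \<and>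
    (\<forall>e\<in>{1,2}. \<forall>k\<in>{1..L}. breakpoints_ok (Zc e k) (c0 * hlev L hh k) (hlev L hh k)) \<and>
    (\<forall>e\<in>{1,2}. \<forall>k\<in>{1..<L}. Zc e k \<subseteq> Zc e (Suc k)) \<and>
    l \<in> {1..L+1} \<and> n \<in> {1..L+1} \<and> d \<in> {1..4} \<and>
    w \<in> Wlev p L Zc mf l \<and> q \<in> Wlev p L Zc mf n
    \<longrightarrow>
    \<bar>h1_inner (vext p (\<lambda>e. Zc e L) (hlev L hh l) d w) (vext p (\<lambda>e. Zc e L) (hlev L hh n) d q)\<bar>
      \<le> c * (min (hlev L hh l) (hlev L hh n) / max (hlev L hh l) (hlev L hh n)) *
         (hlev L hh l / real p * side_H1sq d w + hlev L hh n / real p * side_H1sq d q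
          + real p / hlev L hh l * side_L2sq d w + real p / hlev L hh n * side_L2sq d q)"
proof -
  have "knot_hierarchy C3 c0 hh L Zc"
    if "0 < hh" "1 \<le> L"
      "\<forall>e\<in>{1,2}. breakpoints_ok (Zc e L) (C3 * hh) hh \<and> mult_ok p (Zc e L) (mf e)"
      "\<forall>e\<in>{1,2}. \<forall>k\<in>{1..L}. breakpoints_ok (Zc e k) (c0 * hlev L hh k) (hlev L hh k)"
    for hh L Zc p mf
    using assms that by unfold_locales auto
  then show ?thesis
    by (intro exI allI impI, elim conjE) (rule knot_hierarchy.h1_inner_vext_le; blast)
qed

end
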